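(* Let $\mathcal{V}$ be an entropic Jónsson–Tarski variety and $A$ a $\mathcal{V}$-algebra. Then: (1) $Inv(A)$ is a $\mathcal{V}$-subalgebra of $A$ (with embedding $\upsilon_A$) and hence an internal submonoid of the internal monoid $(A,+^A,0)$. (2) Every $\mathcal{V}$-homomorphism $f\colon A\to B$ restricts and corestricts to a $\mathcal{V}$-homomorphism $Inv(A)\to Inv(B)$. In particular, for every $\mathcal{V}$-algebra $B$ and every $b\in B$, the homomorphism $b_r\colon A\to A\otimes B$, $a\mapsto a\otimes b$, restricts to a homomorphism $Inv(A)\to Inv(A\otimes B)$; hence $\upsilon_A\otimes\upsilon_B$ factors as $Inv(A)\otimes Inv(B)\xrightarrow{\upsilon_{A,B}} Inv(A\otimes B)\hookrightarrow A\otimes B$; moreover, for every monoid $(A,m,e)$ in $\mathcal{V}$ and all $a,b\in Inv(A)$ one has $m(a\otimes b)\in Inv(A)$. (3) For every $\mathcal{V}$-homomorphism $f\colon A\to B$ and every $x\in Inv(A)$ one has $f(-x)=-f(x)$. (4) The map $i\colon Inv(A)\to Inv(A)$, $x\mapsto -x$, is a $\mathcal{V}$-homomorphism. Consequently $Inv(A)$ is a commutative internal group in $\mathcal{V}$, and in fact the largest internal group contained in $A$.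
   Context: A variety is a finitary one-sorted variety of algebras. It is entropic if its algebraic theory is commutative (every operation is a homomorphism); then it is a symmetric monoidal closed category under the entropic tensor product $A\otimes B$, characterized by a bimorphism $A\times B\to A\otimes B$, $(a,b)\mapsto a\otimes b$, through which every bimorphism (map homomorphic in each variable separately) $A\times B\to C$ factors uniquely via a homomorphism $A\otimes B\to C$; the unit object is the free algebra $F1$ on one generator. A Jónsson–Tarski variety has a nullary operation $0$ and a binary operation $+$ with $x+0=x=0+x$; in an entropic one, $(A,+^A,0)$ is a commutative internal monoid in $\mathcal{V}$. An element $x\in A$ is invertible if there is $y\in A$ with $x+y=0=y+x$; such $y$ is unique and denoted $-x$. $Inv(A)$ denotes the set of invertible elements of $A$. A monoid in $\mathcal{V}$ is a triple $(A,m,e)$ with homomorphisms $m\colon A\otimes A\to A$, $e\colon F1\to A$ satisfying associativity and unit laws. An internal group in $\mathcal{V}$ is a group object in the category $\mathcal{V}$ (with respect to finite products). *)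

theory Defs
  imports Main
begin

datatype ('f, 'v) trm = Var 'v | App 'f "('f, 'v) trm list"

fun wf_trm :: "('f \<Rightarrow> nat) \<Rightarrow> ('f, 'v) trm \<Rightarrow> bool" where
  "wf_trm ar (Var v) = True"
| "wf_trm ar (App f ts) = (length ts = ar f \<and> (\<forall>t\<in>set ts. wf_trm ar t))"

fun subst :: "('v \<Rightarrow> ('f, 'w) trm) \<Rightarrow> ('f, 'v) trm \<Rightarrow> ('f, 'w) trm" where
  "subst \<sigma> (Var v) = \<sigma> v"
| "subst \<sigma> (App f ts) = App f (map (subst \<sigma>) ts)"

record ('f, 'a) alg =
  acar :: "'a set"
  aop :: "'f \<Rightarrow> 'a list \<Rightarrow> 'a"

fun eval :: "('f, 'a) alg \<Rightarrow> ('v \<Rightarrow> 'a) \<Rightarrow> ('f, 'v) trm \<Rightarrow> 'a" where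
  "eval A \<sigma> (Var v) = \<sigma> v"
| "eval A \<sigma> (App f ts) = aop A f (map (eval A \<sigma>) ts)"

definition is_alg :: "('f \<Rightarrow> nat) \<Rightarrow> ('f, 'a) alg \<Rightarrow> bool" where
  "is_alg ar A \<longleftrightarrow>
     (\<forall>f xs. length xs = ar f \<and> set xs \<subseteq> acar A \<longrightarrow> aop A f xs \<in> acar A)"

definition in_var :: "('f \<Rightarrow> nat) \<Rightarrow> (('f, nat) trm \<times> ('f, nat) trm) set
     \<Rightarrow> ('f, 'a) alg \<Rightarrow> bool" where
  "in_var ar E A \<longleftrightarrow> is_alg ar A \<and>
     (\<forall>(l, r)\<in>E. \<forall>\<sigma>. (\<forall>v. \<sigma> v \<in> acar A) \<longrightarrow> eval A \<sigma> l = eval A \<sigma> r)"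

inductive deriv :: "('f \<Rightarrow> nat) \<Rightarrow> (('f, nat) trm \<times> ('f, nat) trm) set
     \<Rightarrow> ('f, nat) trm \<Rightarrow> ('f, nat) trm \<Rightarrow> bool"
  for ar E where
  ax: "(l, r) \<in> E \<Longrightarrow> (\<forall>v. wf_trm ar (\<sigma> v)) \<Longrightarrow> deriv ar E (subst \<sigma> l) (subst \<sigma> r)"
| refl: "wf_trm ar t \<Longrightarrow> deriv ar E t t"
| sym: "deriv ar E t u \<Longrightarrow> deriv ar E u t"
| trans: "deriv ar E t u \<Longrightarrow> deriv ar E u w \<Longrightarrow> deriv ar E t w"
| cong: "length ts = ar f \<Longrightarrow> list_all2 (deriv ar E) ts us \<Longrightarrow> deriv ar E (App f ts) (App f us)"

definition variety :: "('f \<Rightarrow> nat) \<Rightarrow> (('f, nat) trm \<times> ('f, nat) trm) set \<Rightarrow> bool" where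
  "variety ar E \<longleftrightarrow> (\<forall>(l, r)\<in>E. wf_trm ar l \<and> wf_trm ar r)"

text \<open>Entropic: for all operations f (arity n) and g (arity m) the theory proves
  f(g(x_11..x_1m),...,g(x_n1..x_nm)) = g(f(x_11..x_n1),...,f(x_1m..x_nm)),
  with x_ij encoded as the variable i*m+j.\<close>

definition ent_lhs :: "('f \<Rightarrow> nat) \<Rightarrow> 'f \<Rightarrow> 'f \<Rightarrow> ('f, nat) trm" where
  "ent_lhs ar f g = App f (map (\<lambda>i. App g (map (\<lambda>j. Var (i * ar g + j)) [0..<ar g])) [0..<ar f])"

definition ent_rhs :: "('f \<Rightarrow> nat) \<Rightarrow> 'f \<Rightarrow> 'f \<Rightarrow> ('f, nat) trm" where
  "ent_rhs ar f g = App g (map (\<lambda>j. App f (map (\<lambda>i. Var (i * ar g + j)) [0..<ar f])) [0..<ar g])"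

definition entropic :: "('f \<Rightarrow> nat) \<Rightarrow> (('f, nat) trm \<times> ('f, nat) trm) set \<Rightarrow> bool" where
  "entropic ar E \<longleftrightarrow> (\<forall>f g. deriv ar E (ent_lhs ar f g) (ent_rhs ar f g))"

definition jonsson_tarski :: "('f \<Rightarrow> nat) \<Rightarrow> (('f, nat) trm \<times> ('f, nat) trm) set
     \<Rightarrow> 'f \<Rightarrow> 'f \<Rightarrow> bool" where
  "jonsson_tarski ar E z p \<longleftrightarrow> ar z = 0 \<and> ar p = 2 \<and>
     deriv ar E (App p [Var 0, App z []]) (Var 0) \<and>
     deriv ar E (App p [App z [], Var 0]) (Var 0)"

definition hom :: "('f \<Rightarrow> nat) \<Rightarrow> ('f, 'a) alg \<Rightarrow> ('f, 'b) alg \<Rightarrow> ('a \<Rightarrow> 'b) \<Rightarrow> bool" where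
  "hom ar A B h \<longleftrightarrow> (\<forall>x\<in>acar A. h x \<in> acar B) \<and>
     (\<forall>f xs. length xs = ar f \<and> set xs \<subseteq> acar A \<longrightarrow> h (aop A f xs) = aop B f (map h xs))"

definition subalg :: "('f \<Rightarrow> nat) \<Rightarrow> 'a set \<Rightarrow> ('f, 'a) alg \<Rightarrow> bool" where
  "subalg ar S A \<longleftrightarrow> S \<subseteq> acar A \<and>
     (\<forall>f xs. length xs = ar f \<and> set xs \<subseteq> S \<longrightarrow> aop A f xs \<in> S)"

definition restr :: "('f, 'a) alg \<Rightarrow> 'a set \<Rightarrow> ('f, 'a) alg" where
  "restr A S = \<lparr>acar = S, aop = aop A\<rparr>"

definition prod_alg :: "('f, 'a) alg \<Rightarrow> ('f, 'b) alg \<Rightarrow> ('f, 'a \<times> 'b) alg" where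
  "prod_alg A B = \<lparr>acar = acar A \<times> acar B,
     aop = (\<lambda>f xs. (aop A f (map fst xs), aop B f (map snd xs)))\<rparr>"

definition term_alg :: "('f, unit) alg" where
  "term_alg = \<lparr>acar = {()}, aop = (\<lambda>f xs. ())\<rparr>"

definition bimor :: "('f \<Rightarrow> nat) \<Rightarrow> ('f, 'a) alg \<Rightarrow> ('f, 'b) alg \<Rightarrow> ('f, 'c) alg
     \<Rightarrow> ('a \<Rightarrow> 'b \<Rightarrow> 'c) \<Rightarrow> bool" where
  "bimor ar A B C h \<longleftrightarrow> (\<forall>a\<in>acar A. hom ar B C (h a)) \<and> (\<forall>b\<in>acar B. hom ar A C (\<lambda>a. h a b))"

text \<open>HOL cannot quantify over types inside a formula, so C ranges over
  V-algebras whose carrier type is that of T.\<close>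

definition is_tensor :: "('f \<Rightarrow> nat) \<Rightarrow> (('f, nat) trm \<times> ('f, nat) trm) set
     \<Rightarrow> ('f, 'a) alg \<Rightarrow> ('f, 'b) alg \<Rightarrow> ('f, 'c) alg \<Rightarrow> ('a \<Rightarrow> 'b \<Rightarrow> 'c) \<Rightarrow> bool" where
  "is_tensor ar E A B T t \<longleftrightarrow> in_var ar E A \<and> in_var ar E B \<and> in_var ar E T \<and>
     bimor ar A B T t \<and>
     (\<forall>(C :: ('f, 'c) alg) h. in_var ar E C \<and> bimor ar A B C h \<longrightarrow>
        (\<exists>g. hom ar T C g \<and> (\<forall>a\<in>acar A. \<forall>b\<in>acar B. g (t a b) = h a b) \<and>
           (\<forall>g'. hom ar T C g' \<and> (\<forall>a\<in>acar A. \<forall>b\<in>acar B. g' (t a b) = h a b)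
                 \<longrightarrow> (\<forall>x\<in>acar T. g' x = g x))))"

text \<open>A monoid (M, m, e) in (V, \<otimes>, F1): (T, t) is a tensor product M \<otimes> M,
  m : M \<otimes> M \<rightarrow> M a homomorphism, and the unit e : F1 \<rightarrow> M is given by the
  image u of the free generator.  Associativity and unit laws are stated on
  generators of the tensor products (pure tensors), which is equivalent to the
  diagrammatic laws since the tensor products are generated by pure tensors.\<close>

definition monoid_in :: "('f \<Rightarrow> nat) \<Rightarrow> (('f, nat) trm \<times> ('f, nat) trm) set
     \<Rightarrow> ('f, 'a) alg \<Rightarrow> ('f, 'c) alg \<Rightarrow> ('a \<Rightarrow> 'a \<Rightarrow> 'c) \<Rightarrow> ('c \<Rightarrow> 'a) \<Rightarrow> 'a \<Rightarrow> bool" where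
  "monoid_in ar E M T t m u \<longleftrightarrow> is_tensor ar E M M T t \<and> hom ar T M m \<and> u \<in> acar M \<and>
     (\<forall>a\<in>acar M. \<forall>b\<in>acar M. \<forall>c\<in>acar M. m (t (m (t a b)) c) = m (t a (m (t b c)))) \<and>
     (\<forall>a\<in>acar M. m (t u a) = a \<and> m (t a u) = a)"

definition plus :: "'f \<Rightarrow> ('f, 'a) alg \<Rightarrow> 'a \<Rightarrow> 'a \<Rightarrow> 'a" where
  "plus p A x y = aop A p [x, y]"

definition zero :: "'f \<Rightarrow> ('f, 'a) alg \<Rightarrow> 'a" where
  "zero z A = aop A z []"

definition Inv :: "'f \<Rightarrow> 'f \<Rightarrow> ('f, 'a) alg \<Rightarrow> 'a set" where
  "Inv z p A = {x \<in> acar A. \<exists>y\<in>acar A. plus p A x y = zero z A \<and> plus p A y x = zero z A}"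

definition neg :: "'f \<Rightarrow> 'f \<Rightarrow> ('f, 'a) alg \<Rightarrow> 'a \<Rightarrow> 'a" where
  "neg z p A x = (THE y. y \<in> acar A \<and> plus p A x y = zero z A \<and> plus p A y x = zero z A)"

text \<open>Internal group in V (group object w.r.t. finite products): multiplication
  G \<times> G \<rightarrow> G, unit 1 \<rightarrow> G (1 the terminal algebra, the map picks u) and inverse
  G \<rightarrow> G are homomorphisms satisfying the group laws.\<close>

definition group_obj :: "('f \<Rightarrow> nat) \<Rightarrow> (('f, nat) trm \<times> ('f, nat) trm) set
     \<Rightarrow> ('f, 'a) alg \<Rightarrow> ('a \<Rightarrow> 'a \<Rightarrow> 'a) \<Rightarrow> 'a \<Rightarrow> ('a \<Rightarrow> 'a) \<Rightarrow> bool" where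
  "group_obj ar E G m u i \<longleftrightarrow> in_var ar E G \<and>
     hom ar (prod_alg G G) G (case_prod m) \<and> hom ar term_alg G (\<lambda>_. u) \<and> hom ar G G i \<and>
     (\<forall>x\<in>acar G. \<forall>y\<in>acar G. \<forall>w\<in>acar G. m (m x y) w = m x (m y w)) \<and>
     (\<forall>x\<in>acar G. m u x = x \<and> m x u = x) \<and>
     (\<forall>x\<in>acar G. m x (i x) = u \<and> m (i x) x = u)"

definition comm_group_obj :: "('f \<Rightarrow> nat) \<Rightarrow> (('f, nat) trm \<times> ('f, nat) trm) set
     \<Rightarrow> ('f, 'a) alg \<Rightarrow> ('a \<Rightarrow> 'a \<Rightarrow> 'a) \<Rightarrow> 'a \<Rightarrow> ('a \<Rightarrow> 'a) \<Rightarrow> bool" where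
  "comm_group_obj ar E G m u i \<longleftrightarrow> group_obj ar E G m u i \<and>
     (\<forall>x\<in>acar G. \<forall>y\<in>acar G. m x y = m y x)"

end

theory Submission
  imports Defs
begin

text \<open>Entropy applied to the operation \<open>+\<close> and itself gives the interchange law
  \<open>(a + b) + (c + d) = (a + c) + (b + d)\<close>, from which, with the unit \<open>0\<close>, the
  Eckmann--Hilton argument makes \<open>+\<close> associative and commutative.  Entropy applied to an
  arbitrary operation \<open>f\<close> and \<open>+\<close> says that \<open>f\<close> is additive, so \<open>f\<close> applied to
  invertible arguments is invertible, with inverse \<open>f\<close> applied to their negatives.  Hence
  \<open>Inv(A)\<close> is a subalgebra on which negation is a homomorphism, and homomorphisms, preserving
  \<open>+\<close> and \<open>0\<close>, preserve invertibility and negatives.  Since the pure tensors generate a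
  tensor product, a homomorphism sending them to invertible elements lands in \<open>Inv\<close>.
  Finally, by Eckmann--Hilton once more, the multiplication of any internal group in the
  variety is its \<open>+\<close>, so the image of an internal group consists of invertible elements.\<close>

lemma eval_in_carrier:
  assumes "is_alg ar A" "\<forall>v. \<sigma> v \<in> acar A" "wf_trm ar t"
  shows "eval A \<sigma> t \<in> acar A"
  using assms(3)
proof (induction t)
  case (App f ts)
  then have "set (map (eval A \<sigma>) ts) \<subseteq> acar A" by auto
  with App.prems assms(1) show ?case unfolding is_alg_def by auto
qed (use assms in simp)

lemma eval_subst: "eval A \<sigma> (subst \<tau> t) = eval A (\<lambda>v. eval A \<sigma> (\<tau> v)) t"
  by (induction t) (auto intro!: arg_cong[where f = "aop A _"])

lemma restr_simps [simp]: "acar (restr A S) = S" "aop (restr A S) = aop A"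
  by (simp_all add: restr_def)

lemma eval_restr: "eval (restr A S) \<sigma> t = eval A \<sigma> t"
  by (induction t) (auto intro!: arg_cong[where f = "aop A _"])

lemma deriv_sound:
  assumes "deriv ar E l r" "in_var ar E A" "\<forall>v. \<sigma> v \<in> acar A"
  shows "eval A \<sigma> l = eval A \<sigma> r"
  using assms(1)
proof (induction rule: deriv.induct)
  case (ax l r \<tau>)
  have "\<forall>v. eval A \<sigma> (\<tau> v) \<in> acar A"
    using eval_in_carrier assms(2,3) ax.hyps(2) unfolding in_var_def by blast
  with assms(2) ax.hyps(1) show ?case
    unfolding in_var_def eval_subst by fastforce
next
  case (cong ts f us)
  from cong.IH have "map (eval A \<sigma>) ts = map (eval A \<sigma>) us"
    by (induction ts us rule: list_all2_induct) auto
  then show ?case by simp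
qed auto

lemma in_var_restr:
  assumes "in_var ar E A" "subalg ar S A"
  shows "in_var ar E (restr A S)"
proof -
  have "is_alg ar (restr A S)" and "S \<subseteq> acar A"
    using assms(2) unfolding is_alg_def subalg_def by auto
  with assms(1) show ?thesis unfolding in_var_def eval_restr restr_simps by blast
qed

lemma hom_comp:
  assumes f: "hom ar A B f" and g: "hom ar B C g"
  shows "hom ar A C (\<lambda>x. g (f x))"
  unfolding hom_def
proof (intro conjI allI impI ballI)
  fix h xs assume xs: "length xs = ar h \<and> set xs \<subseteq> acar A"
  then have "set (map f xs) \<subseteq> acar B" using f unfolding hom_def by auto
  with f g xs show "g (f (aop A h xs)) = aop C h (map (\<lambda>x. g (f x)) xs)"
    unfolding hom_def by (simp add: comp_def)
qed (use f g in \<open>auto simp: hom_def\<close>)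

lemma hom_id: "hom ar A A (\<lambda>x. x)"
  unfolding hom_def by simp

lemma hom_restrict: "hom ar A B h \<Longrightarrow> S \<subseteq> acar A \<Longrightarrow> hom ar (restr A S) B h"
  unfolding hom_def by auto

lemma hom_corestrict: "hom ar A B h \<Longrightarrow> \<forall>x\<in>acar A. h x \<in> S \<Longrightarrow> hom ar A (restr B S) h"
  unfolding hom_def by auto

lemma subalg_vimage:
  assumes "is_alg ar A" "hom ar A B h" "subalg ar S B"
  shows "subalg ar {x \<in> acar A. h x \<in> S} A"
  unfolding subalg_def
proof (intro conjI allI impI)
  fix f xs assume xs: "length xs = ar f \<and> set xs \<subseteq> {x \<in> acar A. h x \<in> S}"
  then have "aop A f xs \<in> acar A" using assms(1) unfolding is_alg_def by blast
  moreover have "h (aop A f xs) = aop B f (map h xs)" using assms(2) xs unfolding hom_def by blast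
  moreover have "set (map h xs) \<subseteq> S" using xs by auto
  then have "aop B f (map h xs) \<in> S" using assms(3) xs unfolding subalg_def by simp
  ultimately show "aop A f xs \<in> {x \<in> acar A. h x \<in> S}" by simp
qed auto

text \<open>The universal property applied to the corestricted tensor map and to the identity
  shows that a subalgebra containing all pure tensors is everything.\<close>

lemma tensor_pure_generate:
  assumes T: "is_tensor ar E A B P s" and S: "subalg ar S P"
    and pure: "\<forall>a\<in>acar A. \<forall>b\<in>acar B. s a b \<in> S"
  shows "acar P \<subseteq> S"
proof
  fix x assume x: "x \<in> acar P"
  have P: "in_var ar E P" and s: "bimor ar A B P s" using T unfolding is_tensor_def by auto
  have SP: "S \<subseteq> acar P" using S unfolding subalg_def by blast
  have "bimor ar A B (restr P S) s"
    using s pure unfolding bimor_def hom_def by auto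
  with T in_var_restr[OF P S] obtain k
    where k: "hom ar P (restr P S) k" "\<forall>a\<in>acar A. \<forall>b\<in>acar B. k (s a b) = s a b"
    unfolding is_tensor_def by blast
  from T P s obtain g where unique: "\<And>g'. hom ar P P g' \<Longrightarrow>
      \<forall>a\<in>acar A. \<forall>b\<in>acar B. g' (s a b) = s a b \<Longrightarrow> \<forall>x\<in>acar P. g' x = g x"
    unfolding is_tensor_def by blast
  have "hom ar P P k" using k(1) SP unfolding hom_def by auto
  then have "k x = x" using unique[OF _ k(2)] unique[OF hom_id] x by simp
  moreover have "k x \<in> S" using k(1) x unfolding hom_def by simp
  ultimately show "x \<in> S" by simp
qed

lemma Inv_sub: "Inv z p A \<subseteq> acar A"
  unfolding Inv_def by blast

lemma Inv_carrier: "x \<in> Inv z p A \<Longrightarrow> x \<in> acar A"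
  unfolding Inv_def by blast

locale entropic_jt =
  fixes ar :: "'f \<Rightarrow> nat" and E :: "(('f, nat) trm \<times> ('f, nat) trm) set" and z p :: 'f
  assumes ent: "entropic ar E" and jt: "jonsson_tarski ar E z p"
begin

lemma ar_zero: "ar z = 0" and ar_plus: "ar p = 2"
  using jt unfolding jonsson_tarski_def by auto

lemma zero_closed: "in_var ar E A \<Longrightarrow> zero z A \<in> acar A"
  unfolding in_var_def is_alg_def zero_def using ar_zero by auto

lemma plus_zero_right: "in_var ar E A \<Longrightarrow> x \<in> acar A \<Longrightarrow> plus p A x (zero z A) = x"
  using deriv_sound[of ar E "App p [Var 0, App z []]" "Var 0" A "\<lambda>_. x"] jt
  by (simp add: jonsson_tarski_def plus_def zero_def)

lemma plus_zero_left: "in_var ar E A \<Longrightarrow> x \<in> acar A \<Longrightarrow> plus p A (zero z A) x = x"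
  using deriv_sound[of ar E "App p [App z [], Var 0]" "Var 0" A "\<lambda>_. x"] jt
  by (simp add: jonsson_tarski_def plus_def zero_def)

lemma plus_interchange:
  assumes A: "in_var ar E A" and "a \<in> acar A" "b \<in> acar A" "c \<in> acar A" "d \<in> acar A"
  shows "plus p A (plus p A a b) (plus p A c d) = plus p A (plus p A a c) (plus p A b d)"
  using deriv_sound[OF ent[unfolded entropic_def, rule_format, of p p] A,
      of "\<lambda>v. if v = 0 then a else if v = 1 then b else if v = 2 then c else d"] assms
  by (simp add: plus_def ent_lhs_def ent_rhs_def ar_plus numeral_2_eq_2)

lemma plus_commute:
  assumes A: "in_var ar E A" and "a \<in> acar A" "b \<in> acar A"
  shows "plus p A a b = plus p A b a"
  using plus_interchange[OF A zero_closed[OF A] assms(2,3) zero_closed[OF A]]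
  by (simp add: plus_zero_left plus_zero_right assms)

lemma plus_assoc:
  assumes A: "in_var ar E A" and "a \<in> acar A" "b \<in> acar A" "c \<in> acar A"
  shows "plus p A (plus p A a b) c = plus p A a (plus p A b c)"
  using plus_interchange[OF A assms(2,3) zero_closed[OF A] assms(4)]
  by (simp add: plus_zero_left plus_zero_right assms)

lemma aop_plus:
  assumes A: "in_var ar E A" and len: "length xs = ar f" "length ys = ar f"
    and xs: "set xs \<subseteq> acar A" and ys: "set ys \<subseteq> acar A"
  shows "aop A f (map2 (plus p A) xs ys) = plus p A (aop A f xs) (aop A f ys)"
proof -
  \<comment> \<open>Variable \<open>2i\<close> of the entropic law stands for \<open>xs ! i\<close> and \<open>2i + 1\<close> for \<open>ys ! i\<close>;
    the other variables are sent to \<open>0\<close> only to stay inside the carrier.\<close>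
  define \<sigma> where "\<sigma> v = (if v div 2 < ar f then (if even v then xs else ys) ! (v div 2)
      else zero z A)" for v
  have "\<forall>v. \<sigma> v \<in> acar A" using xs ys len zero_closed[OF A] by (auto simp: \<sigma>_def)
  from deriv_sound[OF ent[unfolded entropic_def, rule_format, of f p] A this]
  have "aop A f (map (\<lambda>i. plus p A (\<sigma> (i * 2)) (\<sigma> (i * 2 + 1))) [0..<ar f])
      = plus p A (aop A f (map (\<lambda>i. \<sigma> (i * 2)) [0..<ar f]))
          (aop A f (map (\<lambda>i. \<sigma> (i * 2 + 1)) [0..<ar f]))"
    by (simp add: plus_def ent_lhs_def ent_rhs_def ar_plus numeral_2_eq_2 comp_def)
  moreover have "map (\<lambda>i. plus p A (\<sigma> (i * 2)) (\<sigma> (i * 2 + 1))) [0..<ar f] = map2 (plus p A) xs ys"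
    "map (\<lambda>i. \<sigma> (i * 2)) [0..<ar f] = xs" "map (\<lambda>i. \<sigma> (i * 2 + 1)) [0..<ar f] = ys"
    using len by (auto simp: \<sigma>_def list_eq_iff_nth_eq)
  ultimately show ?thesis by simp
qed

lemma aop_zero: "in_var ar E A \<Longrightarrow> aop A f (replicate (ar f) (zero z A)) = zero z A"
  using deriv_sound[OF ent[unfolded entropic_def, rule_format, of f z], of A "\<lambda>_. zero z A"]
    zero_closed[of A]
  by (simp add: zero_def ent_lhs_def ent_rhs_def ar_zero comp_def map_replicate_const)

lemma hom_plus:
  "hom ar A B h \<Longrightarrow> x \<in> acar A \<Longrightarrow> y \<in> acar A \<Longrightarrow> h (plus p A x y) = plus p B (h x) (h y)"
  unfolding hom_def plus_def using ar_plus by simp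

lemma hom_zero: "hom ar A B h \<Longrightarrow> h (zero z A) = zero z B"
  unfolding hom_def zero_def using ar_zero by fastforce

lemma right_inverse_unique:
  assumes A: "in_var ar E A" and x: "x \<in> acar A" and y: "y \<in> acar A" "plus p A x y = zero z A"
    and y': "y' \<in> acar A" "plus p A x y' = zero z A"
  shows "y = y'"
proof -
  have "y = plus p A y (plus p A x y')" using y'(2) plus_zero_right[OF A y(1)] by simp
  also have "\<dots> = plus p A (plus p A x y) y'"
    using plus_assoc[OF A y(1) x y'(1)] plus_commute[OF A x y(1)] by simp
  also have "\<dots> = y'" using y(2) plus_zero_left[OF A y'(1)] by simp
  finally show ?thesis .
qed

lemma Inv_iff:
  assumes A: "in_var ar E A"
  shows "x \<in> Inv z p A \<longleftrightarrow> x \<in> acar A \<and> (\<exists>y\<in>acar A. plus p A x y = zero z A)"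
proof
  assume "x \<in> acar A \<and> (\<exists>y\<in>acar A. plus p A x y = zero z A)"
  then obtain y where "x \<in> acar A" "y \<in> acar A" "plus p A x y = zero z A" by blast
  moreover from calculation have "plus p A y x = zero z A" using plus_commute[OF A] by metis
  ultimately show "x \<in> Inv z p A" unfolding Inv_def by blast
qed (auto simp: Inv_def)

lemma neg_inverse:
  assumes A: "in_var ar E A" and x: "x \<in> Inv z p A"
  shows "neg z p A x \<in> acar A" "plus p A x (neg z p A x) = zero z A"
    "plus p A (neg z p A x) x = zero z A"
proof -
  have "\<exists>!y. y \<in> acar A \<and> plus p A x y = zero z A \<and> plus p A y x = zero z A"
    using x right_inverse_unique[OF A] unfolding Inv_def by blast
  from theI'[OF this] show "neg z p A x \<in> acar A" "plus p A x (neg z p A x) = zero z A"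
    "plus p A (neg z p A x) x = zero z A" unfolding neg_def by auto
qed

lemma neg_unique:
  assumes A: "in_var ar E A" and x: "x \<in> Inv z p A" and y: "y \<in> acar A" "plus p A x y = zero z A"
  shows "neg z p A x = y"
  using right_inverse_unique[OF A Inv_carrier[OF x] neg_inverse(1,2)[OF A x] y] .

lemma neg_Inv:
  assumes A: "in_var ar E A" and x: "x \<in> Inv z p A"
  shows "neg z p A x \<in> Inv z p A"
  using neg_inverse(1,3)[OF A x] Inv_carrier[OF x] Inv_iff[OF A] by blast

lemma aop_Inv:
  assumes A: "in_var ar E A" and len: "length xs = ar f" and xs: "set xs \<subseteq> Inv z p A"
  shows "aop A f xs \<in> Inv z p A" and "neg z p A (aop A f xs) = aop A f (map (neg z p A) xs)"
proof -
  have xs_A: "set xs \<subseteq> acar A" and negs_A: "set (map (neg z p A) xs) \<subseteq> acar A"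
    using xs neg_inverse(1)[OF A] by (auto dest: Inv_carrier)
  have "map2 (plus p A) xs (map (neg z p A) xs) = replicate (ar f) (zero z A)"
    using xs len neg_inverse(2)[OF A] by (auto simp: list_eq_iff_nth_eq subset_iff)
  then have sum: "plus p A (aop A f xs) (aop A f (map (neg z p A) xs)) = zero z A"
    using aop_plus[OF A len _ xs_A negs_A] aop_zero[OF A] len by simp
  have "aop A f xs \<in> acar A" "aop A f (map (neg z p A) xs) \<in> acar A"
    using A xs_A negs_A len unfolding in_var_def is_alg_def by auto
  with sum show Inv: "aop A f xs \<in> Inv z p A" using Inv_iff[OF A] by blast
  show "neg z p A (aop A f xs) = aop A f (map (neg z p A) xs)"
    using neg_unique[OF A Inv] sum \<open>aop A f (map (neg z p A) xs) \<in> acar A\<close> by blast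
qed

lemma subalg_Inv: "in_var ar E A \<Longrightarrow> subalg ar (Inv z p A) A"
  unfolding subalg_def using aop_Inv(1) Inv_sub[of z p A] by blast

lemma hom_Inv:
  assumes A: "in_var ar E A" and B: "in_var ar E B" and h: "hom ar A B h" and x: "x \<in> Inv z p A"
  shows "h x \<in> Inv z p B" and "h (neg z p A x) = neg z p B (h x)"
proof -
  have x_A: "x \<in> acar A" using Inv_carrier[OF x] .
  have sum: "plus p B (h x) (h (neg z p A x)) = zero z B"
    using hom_plus[OF h x_A neg_inverse(1)[OF A x]] neg_inverse(2)[OF A x] hom_zero[OF h] by simp
  have "h x \<in> acar B" "h (neg z p A x) \<in> acar B"
    using h x_A neg_inverse(1)[OF A x] unfolding hom_def by auto
  with sum show Inv: "h x \<in> Inv z p B" using Inv_iff[OF B] by blast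
  show "h (neg z p A x) = neg z p B (h x)"
    using neg_unique[OF B Inv] sum \<open>h (neg z p A x) \<in> acar B\<close> by simp
qed

lemma hom_restr_Inv:
  assumes "in_var ar E A" "in_var ar E B" "hom ar A B h"
  shows "hom ar (restr A (Inv z p A)) (restr B (Inv z p B)) h"
  using hom_corestrict[OF hom_restrict[OF assms(3) Inv_sub]] hom_Inv(1)[OF assms] by simp

lemma tensor_right_restr_Inv:
  assumes T: "is_tensor ar E A B T t" and b: "b \<in> acar B"
  shows "hom ar (restr A (Inv z p A)) (restr T (Inv z p T)) (\<lambda>a. t a b)"
  using T b hom_restr_Inv unfolding is_tensor_def bimor_def by blast

lemma tensor_Inv_factor:
  assumes T: "is_tensor ar E A B T t"
    and P: "is_tensor ar E (restr A (Inv z p A)) (restr B (Inv z p B)) P s"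
    and g: "hom ar P T g" and g_pure: "\<forall>x\<in>Inv z p A. \<forall>y\<in>Inv z p B. g (s x y) = t x y"
  shows "hom ar P (restr T (Inv z p T)) g"
proof -
  have A: "in_var ar E A" and T_var: "in_var ar E T" and t: "bimor ar A B T t"
    using T unfolding is_tensor_def by auto
  have P_var: "in_var ar E P" and s: "bimor ar (restr A (Inv z p A)) (restr B (Inv z p B)) P s"
    using P unfolding is_tensor_def by auto
  let ?S = "{x \<in> acar P. g x \<in> Inv z p T}"
  have "subalg ar ?S P"
    using subalg_vimage g subalg_Inv[OF T_var] P_var unfolding in_var_def by blast
  moreover have "\<forall>a\<in>Inv z p A. \<forall>b\<in>Inv z p B. s a b \<in> ?S"
  proof (intro ballI)
    fix a b assume a: "a \<in> Inv z p A" and b: "b \<in> Inv z p B"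
    have "hom ar A T (\<lambda>x. t x b)" using t b unfolding bimor_def by (blast dest: Inv_carrier)
    then have "t a b \<in> Inv z p T" using hom_Inv(1)[OF A T_var _ a] by blast
    moreover have "s a b \<in> acar P" using s a b unfolding bimor_def hom_def by simp
    ultimately show "s a b \<in> ?S" using g_pure a b by simp
  qed
  ultimately have "acar P \<subseteq> ?S" using tensor_pure_generate[OF P] by simp
  then show ?thesis using hom_corestrict[OF g] by blast
qed

lemma monoid_mult_Inv:
  assumes M: "monoid_in ar E M TM tm m u" and a: "a \<in> Inv z p M" and b: "b \<in> Inv z p M"
  shows "m (tm a b) \<in> Inv z p M"
proof -
  have M_var: "in_var ar E M" and "bimor ar M M TM tm" and m: "hom ar TM M m"
    using M unfolding monoid_in_def is_tensor_def by auto
  then have "hom ar M TM (\<lambda>x. tm x b)" using b unfolding bimor_def by (blast dest: Inv_carrier)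
  then have "hom ar M M (\<lambda>x. m (tm x b))" using hom_comp m by blast
  then show ?thesis using hom_Inv(1)[OF M_var M_var _ a] by blast
qed

lemma hom_neg_Inv:
  assumes A: "in_var ar E A"
  shows "hom ar (restr A (Inv z p A)) (restr A (Inv z p A)) (neg z p A)"
  unfolding hom_def using neg_Inv[OF A] aop_Inv(2)[OF A] by simp

lemma hom_plus_prod:
  assumes A: "in_var ar E A" and S: "S \<subseteq> acar A"
    and closed: "\<forall>x\<in>S. \<forall>y\<in>S. plus p A x y \<in> S"
  shows "hom ar (prod_alg (restr A S) (restr A S)) (restr A S) (case_prod (plus p A))"
  unfolding hom_def
proof (intro conjI allI impI ballI)
  fix f xs assume xs: "length xs = ar f \<and> set xs \<subseteq> acar (prod_alg (restr A S) (restr A S))"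
  then have "set (map fst xs) \<subseteq> acar A" "set (map snd xs) \<subseteq> acar A"
    using S by (auto simp: prod_alg_def)
  moreover have "map (case_prod (plus p A)) xs = map2 (plus p A) (map fst xs) (map snd xs)"
    by (simp add: zip_map_fst_snd case_prod_beta)
  ultimately show "case_prod (plus p A) (aop (prod_alg (restr A S) (restr A S)) f xs)
      = aop (restr A S) f (map (case_prod (plus p A)) xs)"
    using aop_plus[OF A] xs by (simp add: prod_alg_def)
qed (use closed in \<open>auto simp: prod_alg_def\<close>)

lemma hom_zero_term_alg:
  assumes A: "in_var ar E A" and "zero z A \<in> S"
  shows "hom ar term_alg (restr A S) (\<lambda>_. zero z A)"
  unfolding hom_def
proof (intro conjI allI impI ballI)
  fix f and xs :: "unit list" assume "length xs = ar f \<and> set xs \<subseteq> acar term_alg"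
  then have "map (\<lambda>_. zero z A) xs = replicate (ar f) (zero z A)" by (simp add: map_replicate_const)
  then show "zero z A = aop (restr A S) f (map (\<lambda>_. zero z A) xs)" using aop_zero[OF A] by simp
qed (use assms in simp)

lemma comm_group_obj_Inv:
  assumes A: "in_var ar E A"
  shows "comm_group_obj ar E (restr A (Inv z p A)) (plus p A) (zero z A) (neg z p A)"
proof -
  have plus_Inv: "\<forall>x\<in>Inv z p A. \<forall>y\<in>Inv z p A. plus p A x y \<in> Inv z p A"
    using subalg_Inv[OF A] ar_plus unfolding subalg_def plus_def by simp
  have zero_Inv: "zero z A \<in> Inv z p A"
    using Inv_iff[OF A] zero_closed[OF A] plus_zero_right[OF A] by blast
  note carrier = Inv_carrier[of _ z p A]
  show ?thesis
    unfolding comm_group_obj_def group_obj_def restr_simps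
  proof (intro conjI ballI)
    show "in_var ar E (restr A (Inv z p A))" using in_var_restr[OF A subalg_Inv[OF A]] .
    show "hom ar (prod_alg (restr A (Inv z p A)) (restr A (Inv z p A))) (restr A (Inv z p A))
        (case_prod (plus p A))"
      using hom_plus_prod[OF A Inv_sub plus_Inv] .
    show "hom ar term_alg (restr A (Inv z p A)) (\<lambda>_. zero z A)"
      using hom_zero_term_alg[OF A zero_Inv] .
    show "hom ar (restr A (Inv z p A)) (restr A (Inv z p A)) (neg z p A)"
      using hom_neg_Inv[OF A] .
    show "plus p A (plus p A x y) w = plus p A x (plus p A y w)"
      if "x \<in> Inv z p A" "y \<in> Inv z p A" "w \<in> Inv z p A" for x y w
      using plus_assoc[OF A] carrier that by blast
    show "plus p A (zero z A) x = x" "plus p A x (zero z A) = x" if "x \<in> Inv z p A" for x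
      using plus_zero_left[OF A] plus_zero_right[OF A] carrier that by blast+
    show "plus p A x (neg z p A x) = zero z A" "plus p A (neg z p A x) x = zero z A"
      if "x \<in> Inv z p A" for x
      using neg_inverse(2,3)[OF A that] by auto
    show "plus p A x y = plus p A y x" if "x \<in> Inv z p A" "y \<in> Inv z p A" for x y
      using plus_commute[OF A] carrier that by blast
  qed
qed

lemma hom_term_alg_zero:
  assumes "hom ar term_alg G (\<lambda>_. u)"
  shows "u = zero z G"
proof -
  have "length ([] :: unit list) = ar z \<and> set ([] :: unit list) \<subseteq> acar term_alg"
    using ar_zero by simp
  with assms have "u = aop G z (map (\<lambda>_. u) ([] :: unit list))" unfolding hom_def by blast
  then show ?thesis by (simp add: zero_def)
qed

text \<open>Eckmann--Hilton: a unital multiplication that is a homomorphism \<open>G \<times> G \<rightarrow> G\<close>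
  interchanges with \<open>+\<close>, hence coincides with it.\<close>

lemma hom_mult_eq_plus:
  assumes G: "in_var ar E G" and m: "hom ar (prod_alg G G) G (case_prod m)"
    and unit: "\<forall>x\<in>acar G. m (zero z G) x = x \<and> m x (zero z G) = x"
    and a: "a \<in> acar G" and b: "b \<in> acar G"
  shows "m a b = plus p G a b"
proof -
  let ?xs = "[(a, zero z G), (zero z G, b)]"
  have "length ?xs = ar p \<and> set ?xs \<subseteq> acar (prod_alg G G)"
    using a b zero_closed[OF G] ar_plus by (simp add: prod_alg_def)
  with m have "case_prod m (aop (prod_alg G G) p ?xs) = aop G p (map (case_prod m) ?xs)"
    unfolding hom_def by blast
  then have "m (plus p G a (zero z G)) (plus p G (zero z G) b)
      = plus p G (m a (zero z G)) (m (zero z G) b)"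
    by (simp add: prod_alg_def plus_def)
  then show ?thesis using plus_zero_right[OF G a] plus_zero_left[OF G b] unit a b by simp
qed

lemma group_obj_hom_Inv:
  assumes A: "in_var ar E A" and G: "group_obj ar E G m u i" and j: "hom ar G A j"
    and x: "x \<in> acar G"
  shows "j x \<in> Inv z p A"
proof -
  have u: "u = zero z G" using G hom_term_alg_zero[of G u] unfolding group_obj_def by blast
  have G_var: "in_var ar E G" and m: "hom ar (prod_alg G G) G (case_prod m)"
    and i: "hom ar G G i"
    and unit: "\<forall>x\<in>acar G. m (zero z G) x = x \<and> m x (zero z G) = x"
    and inverse: "m x (i x) = zero z G"
    using G x u unfolding group_obj_def by auto
  have ix: "i x \<in> acar G" using i x unfolding hom_def by blast
  have "plus p G x (i x) = zero z G"
    using hom_mult_eq_plus[OF G_var m unit x ix] inverse by simp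
  then have "plus p A (j x) (j (i x)) = zero z A"
    using hom_plus[OF j x ix] hom_zero[OF j] by simp
  moreover have "j x \<in> acar A" "j (i x) \<in> acar A" using j x ix unfolding hom_def by auto
  ultimately show ?thesis using Inv_iff[OF A] by blast
qed

end

theorem lemma1p5:
  fixes ar :: "'f \<Rightarrow> nat" and E :: "(('f, nat) trm \<times> ('f, nat) trm) set"
    and z p :: 'f and A :: "('f, 'a) alg"
  assumes V: "variety ar E" and ent: "entropic ar E" and jt: "jonsson_tarski ar E z p"
    and A: "in_var ar E A"
  shows
    "subalg ar (Inv z p A) A \<and>
    (\<forall>(B :: ('f, 'b) alg) f. in_var ar E B \<and> hom ar A B f \<longrightarrow>
          hom ar (restr A (Inv z p A)) (restr B (Inv z p B)) f) \<and>
    (\<forall>(B :: ('f, 'b) alg) (T :: ('f, 'c) alg) t. is_tensor ar E A B T t \<longrightarrow>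
          (\<forall>b\<in>acar B. hom ar (restr A (Inv z p A)) (restr T (Inv z p T)) (\<lambda>a. t a b))) \<and>
    (\<forall>(B :: ('f, 'b) alg) (T :: ('f, 'c) alg) t (P :: ('f, 'd) alg) s g.
          is_tensor ar E A B T t \<and>
          is_tensor ar E (restr A (Inv z p A)) (restr B (Inv z p B)) P s \<and>
          hom ar P T g \<and> (\<forall>x\<in>Inv z p A. \<forall>y\<in>Inv z p B. g (s x y) = t x y) \<longrightarrow>
          hom ar P (restr T (Inv z p T)) g) \<and>
    (\<forall>(M :: ('f, 'e) alg) (TM :: ('f, 'g) alg) tm m u. monoid_in ar E M TM tm m u \<longrightarrow>
          (\<forall>a\<in>Inv z p M. \<forall>b\<in>Inv z p M. m (tm a b) \<in> Inv z p M)) \<and>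
    (\<forall>(B :: ('f, 'b) alg) f. in_var ar E B \<and> hom ar A B f \<longrightarrow>
          (\<forall>x\<in>Inv z p A. f (neg z p A x) = neg z p B (f x))) \<and>
    (hom ar (restr A (Inv z p A)) (restr A (Inv z p A)) (neg z p A)) \<and>
    (comm_group_obj ar E (restr A (Inv z p A)) (plus p A) (zero z A) (neg z p A)) \<and>
    (\<forall>(G :: ('f, 'h) alg) j m u i. group_obj ar E G m u i \<and> hom ar G A j \<and> inj_on j (acar G)
          \<longrightarrow> j ` acar G \<subseteq> Inv z p A)"
proof -
  interpret entropic_jt ar E z p using ent jt by unfold_locales
  show ?thesis
    by (intro conjI allI impI ballI)
      (auto intro: subalg_Inv[OF A] hom_restr_Inv[OF A] tensor_right_restr_Inv tensor_Inv_factor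
        monoid_mult_Inv hom_Inv(2)[OF A] hom_neg_Inv[OF A] comm_group_obj_Inv[OF A]
        group_obj_hom_Inv[OF A])
qed

end
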